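(* Let $p\propto\exp(-f)$ be a probability density on $\mathbb{R}^d$, where $f:\mathbb{R}^d\to\mathbb{R}$ has $L$-Lipschitz gradient and $M:=\mathbb{E}_{\mathbf{x}\sim p}[\|\mathbf{x}\|^2]<\infty$. Let $\varphi_1$ be the density of the standard Gaussian $\mathcal{N}(0,I_d)$. Then $\mathrm{KL}(p\,\|\,\varphi_1)\le Ld+M$. *)

theory Defs
  imports "HOL-Analysis.Analysis"
begin

definition std_gauss_density :: "'a::euclidean_space \<Rightarrow> real" where
  "std_gauss_density x = (2 * pi) powr (- real DIM('a) / 2) * exp (- (norm x)\<^sup>2 / 2)"

definition KL_dens :: "('a::euclidean_space \<Rightarrow> real) \<Rightarrow> ('a \<Rightarrow> real) \<Rightarrow> real" where
  "KL_dens p q = (\<integral>x. p x * ln (p x / q x) \<partial>lborel)"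

end

theory Submission
  imports Defs
begin

text \<open>
  By the descent lemma, \<open>f (x + u) + f (x - u) \<le> 2 f x + L |u|\<^sup>2\<close>, so by AM-GM the
  symmetrized integrand \<open>exp (- f (x + u)) + exp (- f (x - u))\<close> is at least
  \<open>2 exp (- f x - L d r\<^sup>2 / 2)\<close> on the cube of half-width \<open>r\<close>. Integrating over the cube bounds
  the normalizer from below: \<open>Z \<ge> (2 r)\<^sup>d exp (- f x - L d r\<^sup>2 / 2)\<close> for every \<open>x\<close>. Taking
  \<open>r = 1 / sqrt L\<close> gives \<open>ln p x \<le> d/2 (ln (L / 4) + 1)\<close>, hence
  \<open>ln (p x / \<phi>\<^sub>1 x) \<le> d/2 (ln (\<pi> L / 2) + 1) + |x|\<^sup>2 / 2 \<le> L d + |x|\<^sup>2 / 2\<close>, and integrating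
  against \<open>p\<close> yields \<open>KL \<le> L d + M / 2\<close>. Since \<open>f\<close> grows at most quadratically,
  \<open>|ln (p / \<phi>\<^sub>1)|\<close> is bounded by a quadratic in \<open>|x|\<close>, which makes the KL integrand integrable.
\<close>

lemma two_exp_midpoint_le: "2 * exp ((a + b) / 2) \<le> exp a + exp (b::real)"
  using convex_onD[OF exp_convex, of "1/2" a b] by (simp add: add_divide_distrib)

lemma lipschitz_gradient_upper_bound:
  fixes f :: "'a::real_inner \<Rightarrow> real" and g :: "'a \<Rightarrow> 'a"
  assumes grad: "\<And>x. (f has_derivative (\<lambda>h. g x \<bullet> h)) (at x)"
    and lip: "L-lipschitz_on UNIV g"
  shows "f (x + u) \<le> f x + g x \<bullet> u + L / 2 * (norm u)\<^sup>2"
proof -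
  define h where "h t = f (x + t *\<^sub>R u) - t * (g x \<bullet> u) - L / 2 * t\<^sup>2 * (norm u)\<^sup>2" for t
  have "h 1 \<le> h 0"
  proof (rule DERIV_nonpos_imp_nonincreasing[of 0 1 h])
    fix t :: real assume t: "0 \<le> t" "t \<le> 1"
    have "((\<lambda>t. f (x + t *\<^sub>R u)) has_real_derivative g (x + t *\<^sub>R u) \<bullet> u) (at t)"
      unfolding has_field_derivative_def
      by (rule has_derivative_eq_rhs[OF has_derivative_compose[OF _ grad]])
         (auto intro!: derivative_eq_intros)
    then have "(h has_real_derivative (g (x + t *\<^sub>R u) - g x) \<bullet> u - L * t * (norm u)\<^sup>2) (at t)"
      unfolding h_def by (auto intro!: derivative_eq_intros simp: inner_diff_left)
    moreover have "(g (x + t *\<^sub>R u) - g x) \<bullet> u \<le> L * t * (norm u)\<^sup>2"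
    proof -
      have "(g (x + t *\<^sub>R u) - g x) \<bullet> u \<le> norm (g (x + t *\<^sub>R u) - g x) * norm u"
        by (rule norm_cauchy_schwarz)
      also have "\<dots> \<le> L * (t * norm u) * norm u"
        using lipschitz_onD[OF lip, of "x + t *\<^sub>R u" x] t by (simp add: dist_norm mult_right_mono)
      finally show ?thesis by (simp add: power2_eq_square mult.assoc)
    qed
    ultimately show "\<exists>y. (h has_real_derivative y) (at t) \<and> y \<le> 0" by force
  qed simp
  then show ?thesis unfolding h_def by simp
qed

lemma lipschitz_gradient_quadratic_growth:
  fixes f :: "'a::real_inner \<Rightarrow> real" and g :: "'a \<Rightarrow> 'a"
  assumes grad: "\<And>x. (f has_derivative (\<lambda>h. g x \<bullet> h)) (at x)"
    and lip: "L-lipschitz_on UNIV g"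
  shows "f x \<le> f 0 + (norm (g 0))\<^sup>2 / 2 + (L + 1) / 2 * (norm x)\<^sup>2"
proof -
  have "g 0 \<bullet> x \<le> norm (g 0) * norm x" by (rule norm_cauchy_schwarz)
  also have "\<dots> \<le> ((norm (g 0))\<^sup>2 + (norm x)\<^sup>2) / 2"
    using sum_squares_bound[of "norm (g 0)" "norm x"] by (simp add: power2_eq_square)
  finally show ?thesis
    using lipschitz_gradient_upper_bound[OF grad lip, of 0 x] by (simp add: field_simps)
qed

lemma has_integral_lborel_unit_affine:
  fixes h :: "'a::euclidean_space \<Rightarrow> real"
  assumes h: "integrable lborel h" and c: "\<bar>c\<bar> = 1"
  shows "((\<lambda>x. h (t + c *\<^sub>R x)) has_integral (\<integral>x. h x \<partial>lborel)) UNIV"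
proof -
  have lborel_eq: "lborel = distr lborel borel (\<lambda>x. t + c *\<^sub>R x)"
    using lborel_affine[of c t] c by (auto simp: density_1)
  have [measurable]: "h \<in> borel_measurable borel"
    using borel_measurable_integrable[OF h] by simp
  have "integrable lborel (\<lambda>x. h (t + c *\<^sub>R x))"
    using h integrable_distr_eq[of "\<lambda>x. t + c *\<^sub>R x" lborel borel h] lborel_eq by simp
  moreover have "(\<integral>x. h (t + c *\<^sub>R x) \<partial>lborel) = (\<integral>x. h x \<partial>lborel)"
    using integral_distr[of "\<lambda>x. t + c *\<^sub>R x" lborel borel h] lborel_eq by simp
  ultimately show ?thesis
    by (metis has_integral_integral_lborel)
qed

lemma norm_le_in_cube:
  fixes u :: "'a::euclidean_space" and r :: real
  assumes "u \<in> cbox (- (r *\<^sub>R One)) (r *\<^sub>R One)"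
  shows "(norm u)\<^sup>2 \<le> DIM('a) * r\<^sup>2"
proof -
  have "(norm u)\<^sup>2 = (\<Sum>i\<in>Basis. (u \<bullet> i)\<^sup>2)"
    unfolding power2_norm_eq_inner by (subst euclidean_inner) (simp add: power2_eq_square)
  also have "\<dots> \<le> (\<Sum>i\<in>(Basis::'a set). r\<^sup>2)"
  proof (rule sum_mono)
    fix i :: 'a assume "i \<in> Basis"
    then have "\<bar>u \<bullet> i\<bar> \<le> \<bar>r\<bar>" using assms by (auto simp: mem_box inner_minus_left)
    then show "(u \<bullet> i)\<^sup>2 \<le> r\<^sup>2" by (simp add: abs_le_square_iff)
  qed
  finally show ?thesis by simp
qed

lemma content_cube:
  assumes "r \<ge> 0"
  shows "measure lborel (cbox (- (r *\<^sub>R One)) (r *\<^sub>R One) :: 'a::euclidean_space set) = (2 * r) ^ DIM('a)"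
  using assms by (subst content_cbox) (auto simp: inner_minus_left prod_constant)

lemma ln_div_std_gauss_density:
  fixes x :: "'a::euclidean_space"
  assumes "c > 0"
  shows "ln (c / std_gauss_density x) = ln c + DIM('a) / 2 * ln (2 * pi) + (norm x)\<^sup>2 / 2"
  using assms by (simp add: std_gauss_density_def ln_div ln_mult ln_powr)

lemma integrable_mult_quadratic_bound:
  fixes p h :: "'a::real_normed_vector \<Rightarrow> real"
  assumes p: "integrable M p" and moment: "integrable M (\<lambda>x. p x * (norm x)\<^sup>2)"
    and h: "h \<in> borel_measurable M"
    and p_nonneg: "\<And>x. p x \<ge> 0" and bound: "\<And>x. \<bar>h x\<bar> \<le> A + B * (norm x)\<^sup>2"
  shows "integrable M (\<lambda>x. p x * h x)"
proof (rule Bochner_Integration.integrable_bound)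
  show "integrable M (\<lambda>x. A * p x + B * (p x * (norm x)\<^sup>2))"
    using p moment by simp
  show "(\<lambda>x. p x * h x) \<in> borel_measurable M"
    using p h by measurable
  show "AE x in M. norm (p x * h x) \<le> norm (A * p x + B * (p x * (norm x)\<^sup>2))"
  proof (rule AE_I2)
    fix x
    have "norm (p x * h x) = p x * \<bar>h x\<bar>" using p_nonneg[of x] by (simp add: abs_mult)
    also have "\<dots> \<le> p x * (A + B * (norm x)\<^sup>2)" using mult_left_mono[OF bound p_nonneg] .
    also have "\<dots> \<le> norm (A * p x + B * (p x * (norm x)\<^sup>2))" by (simp add: algebra_simps)
    finally show "norm (p x * h x) \<le> norm (A * p x + B * (p x * (norm x)\<^sup>2))" .
  qed
qed

lemma integral_mult_le_quadratic_bound: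
  fixes p h :: "'a::real_normed_vector \<Rightarrow> real"
  assumes ph: "integrable M (\<lambda>x. p x * h x)"
    and p: "integrable M p" and moment: "integrable M (\<lambda>x. p x * (norm x)\<^sup>2)"
    and p_nonneg: "\<And>x. p x \<ge> 0" and bound: "\<And>x. h x \<le> a + b * (norm x)\<^sup>2"
  shows "(\<integral>x. p x * h x \<partial>M) \<le> a * (\<integral>x. p x \<partial>M) + b * (\<integral>x. p x * (norm x)\<^sup>2 \<partial>M)"
proof -
  have "(\<integral>x. p x * h x \<partial>M) \<le> (\<integral>x. a * p x + b * (p x * (norm x)\<^sup>2) \<partial>M)"
  proof (rule integral_mono[OF ph])
    show "integrable M (\<lambda>x. a * p x + b * (p x * (norm x)\<^sup>2))" using p moment by simp
    fix x
    have "p x * h x \<le> p x * (a + b * (norm x)\<^sup>2)" using mult_left_mono[OF bound p_nonneg] .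
    then show "p x * h x \<le> a * p x + b * (p x * (norm x)\<^sup>2)" by (simp add: algebra_simps)
  qed
  then show ?thesis using p moment by simp
qed

locale gibbs_potential =
  fixes f :: "'a::euclidean_space \<Rightarrow> real" and g :: "'a \<Rightarrow> 'a" and L :: real
  assumes gradient: "\<And>x. (f has_derivative (\<lambda>h. g x \<bullet> h)) (at x)"
    and lipschitz_gradient: "L-lipschitz_on UNIV g"
    and normalizable: "integrable lborel (\<lambda>x. exp (- f x))"
begin

abbreviation Z :: real where "Z \<equiv> \<integral>y. exp (- f y) \<partial>lborel"

lemma borel_measurable_potential [measurable]: "f \<in> borel_measurable borel"
  using gradient by (intro borel_measurable_continuous_onI continuous_at_imp_continuous_on
      ballI has_derivative_continuous) auto

lemma normalizer_lower_bound:
  assumes r: "r > 0"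
  shows "(2 * r) ^ DIM('a) * exp (- f x - L * DIM('a) * r\<^sup>2 / 2) \<le> Z"
proof -
  define C where "C = cbox (- (r *\<^sub>R One)) (r *\<^sub>R (One::'a))"
  define K where "K = exp (- f x - L * DIM('a) * r\<^sup>2 / 2)"
  have "((\<lambda>u. if u \<in> C then 2 * K else 0) has_integral (2 * r) ^ DIM('a) * (2 * K)) UNIV"
    using has_integral_const[of "2 * K" "- (r *\<^sub>R One)" "r *\<^sub>R (One::'a)"] r
    unfolding has_integral_restrict_UNIV C_def content_cube[OF less_imp_le[OF r]]
    by (simp only: real_scaleR_def)
  moreover have "((\<lambda>u. exp (- f (x + u)) + exp (- f (x - u))) has_integral Z + Z) UNIV"
    using has_integral_add[OF has_integral_lborel_unit_affine[OF normalizable, of 1 x]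
        has_integral_lborel_unit_affine[OF normalizable, of "-1" x]] by simp
  moreover have "(if u \<in> C then 2 * K else 0) \<le> exp (- f (x + u)) + exp (- f (x - u))" for u
  proof (cases "u \<in> C")
    case True
    have "L * (norm u)\<^sup>2 \<le> L * (DIM('a) * r\<^sup>2)"
      using True norm_le_in_cube lipschitz_on_nonneg[OF lipschitz_gradient]
      unfolding C_def by (intro mult_left_mono) auto
    moreover have "f (x + u) \<le> f x + g x \<bullet> u + L / 2 * (norm u)\<^sup>2"
      and "f (x + - u) \<le> f x + g x \<bullet> (- u) + L / 2 * (norm (- u))\<^sup>2"
      by (rule lipschitz_gradient_upper_bound[OF gradient lipschitz_gradient])+
    ultimately have "K \<le> exp ((- f (x + u) + - f (x - u)) / 2)"
      unfolding K_def by (simp add: algebra_simps)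
    also have "2 * \<dots> \<le> exp (- f (x + u)) + exp (- f (x - u))"
      by (rule two_exp_midpoint_le)
    finally show ?thesis using True by simp
  qed (simp add: add_nonneg_nonneg)
  ultimately have "(2 * r) ^ DIM('a) * (2 * K) \<le> Z + Z"
    by (rule has_integral_le)
  then show ?thesis unfolding K_def by simp
qed

lemma normalizer_pos: "Z > 0"
proof -
  have "0 < (2 * 1) ^ DIM('a) * exp (- f 0 - L * DIM('a) * 1\<^sup>2 / 2)" by simp
  also have "\<dots> \<le> Z" by (rule normalizer_lower_bound) simp
  finally show ?thesis .
qed

lemma lipschitz_constant_pos: "L > 0"
proof (rule ccontr)
  assume "\<not> L > 0"
  then have L: "L = 0" using lipschitz_on_nonneg[OF lipschitz_gradient] by simp
  define e where "e = exp (- f 0)"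
  define r where "r = (Z / e + 2) / 2"
  have e: "e > 0" unfolding e_def by simp
  have r: "r > 0" "2 * r \<ge> 1" unfolding r_def using normalizer_pos e by (auto simp: field_simps)
  have "2 * r * e \<le> (2 * r) ^ DIM('a) * e"
    using power_increasing[of 1 "DIM('a)" "2 * r"] r e by simp
  also have "\<dots> \<le> Z"
    using normalizer_lower_bound[OF r(1), of 0] L unfolding e_def by simp
  finally have "2 * r * e \<le> Z" .
  moreover have "2 * r * e = Z + 2 * e" unfolding r_def using e by (simp add: field_simps)
  ultimately show False using e by simp
qed

lemma log_density_le: "- f x - ln Z \<le> DIM('a) / 2 * (ln (L / 4) + 1)"
proof -
  define r where "r = 1 / sqrt L"
  have L: "L > 0" by (rule lipschitz_constant_pos)
  then have r: "r > 0" and "L * r\<^sup>2 = 1"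
    unfolding r_def by (simp_all add: power_divide)
  then have "ln ((2 * r) ^ DIM('a) * exp (- f x - L * DIM('a) * r\<^sup>2 / 2))
      = DIM('a) * ln (2 * r) - f x - DIM('a) / 2"
    by (simp add: ln_mult ln_realpow mult.commute[of L] mult.assoc distrib_left)
  moreover have "ln (2 * r) = - ln (L / 4) / 2"
    unfolding r_def using L ln_realpow[of 2 2] by (simp add: ln_div ln_sqrt)
  moreover have "ln ((2 * r) ^ DIM('a) * exp (- f x - L * DIM('a) * r\<^sup>2 / 2)) \<le> ln Z"
    using normalizer_lower_bound[OF r, of x] r normalizer_pos by (subst ln_le_cancel_iff) auto
  ultimately show ?thesis by (simp add: algebra_simps)
qed

lemma log_ratio_std_gauss_eq:
  "ln (exp (- f x) / Z / std_gauss_density x)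
     = - f x - ln Z + DIM('a) / 2 * ln (2 * pi) + (norm x)\<^sup>2 / 2"
  using normalizer_pos by (subst ln_div_std_gauss_density) (simp_all add: ln_div)

lemma log_ratio_std_gauss_le:
  "ln (exp (- f x) / Z / std_gauss_density x) \<le> L * DIM('a) + (norm x)\<^sup>2 / 2"
proof -
  have L: "L > 0" by (rule lipschitz_constant_pos)
  have "ln (L / 4) + 1 + ln (2 * pi) = ln (pi * L / 2) + 1"
    using L ln_realpow[of 2 2] by (simp add: ln_div ln_mult)
  also have "\<dots> \<le> pi * L / 2" using L ln_le_minus_one[of "pi * L / 2"] by simp
  also have "\<dots> \<le> 2 * L" using L pi_less_4 by simp
  finally have "DIM('a) / 2 * (ln (L / 4) + 1 + ln (2 * pi)) \<le> DIM('a) / 2 * (2 * L)"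
    by (intro mult_left_mono) auto
  then show ?thesis
    using log_density_le[of x] unfolding log_ratio_std_gauss_eq by (simp add: algebra_simps)
qed

lemma log_ratio_std_gauss_abs_le:
  obtains A where "\<And>x. \<bar>ln (exp (- f x) / Z / std_gauss_density x)\<bar> \<le> A + (L + 1) * (norm x)\<^sup>2"
proof -
  define A where "A = \<bar>f 0\<bar> + (norm (g 0))\<^sup>2 / 2 + \<bar>ln Z\<bar> + L * DIM('a)"
  have L: "L \<ge> 0" using lipschitz_constant_pos by simp
  have "\<bar>ln (exp (- f x) / Z / std_gauss_density x)\<bar> \<le> A + (L + 1) * (norm x)\<^sup>2" for x
  proof -
    have "0 \<le> L * (norm x)\<^sup>2" "0 \<le> L * DIM('a)" "0 \<le> DIM('a) / 2 * ln (2 * pi)"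
      using L pi_gt3 by simp_all
    moreover have "(L + 1) / 2 * (norm x)\<^sup>2 = L * (norm x)\<^sup>2 / 2 + (norm x)\<^sup>2 / 2"
      and "(L + 1) * (norm x)\<^sup>2 = L * (norm x)\<^sup>2 + (norm x)\<^sup>2"
      by (simp_all add: field_simps)
    moreover note lipschitz_gradient_quadratic_growth[OF gradient lipschitz_gradient, of x]
      log_ratio_std_gauss_le[of x]
    ultimately show ?thesis
      unfolding A_def abs_le_iff log_ratio_std_gauss_eq
      using abs_ge_self[of "f 0"] abs_ge_self[of "ln Z"] abs_ge_minus_self[of "ln Z"]
        zero_le_power2[of "norm (g 0)"] zero_le_power2[of "norm x"]
      by (intro conjI) linarith+
  qed
  then show thesis by (rule that)
qed

end

theorem lemma3:
  fixes f :: "'a::euclidean_space \<Rightarrow> real" and g :: "'a \<Rightarrow> 'a" and L :: real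
  assumes grad: "\<And>x. (f has_derivative (\<lambda>h. g x \<bullet> h)) (at x)"
    and lip: "L-lipschitz_on UNIV g"
    and normalizable: "integrable lborel (\<lambda>x. exp (- f x))"
    and moment: "integrable lborel (\<lambda>x. exp (- f x) / (\<integral>y. exp (- f y) \<partial>lborel) * (norm x)\<^sup>2)"
  defines "p \<equiv> (\<lambda>x. exp (- f x) / (\<integral>y. exp (- f y) \<partial>lborel))"
    and "M \<equiv> (\<integral>x. exp (- f x) / (\<integral>y. exp (- f y) \<partial>lborel) * (norm x)\<^sup>2 \<partial>lborel)"
  shows "integrable lborel (\<lambda>x. p x * ln (p x / std_gauss_density x))
         \<and> KL_dens p std_gauss_density \<le> L * real DIM('a) + M"
proof -
  interpret gibbs_potential f g L
    using grad lip normalizable by unfold_locales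
  have p_nonneg: "\<And>x. p x \<ge> 0" and p_int: "integrable lborel p" and p_total: "(\<integral>x. p x \<partial>lborel) = 1"
    unfolding p_def using normalizer_pos normalizable by auto
  have p_moment: "integrable lborel (\<lambda>x. p x * (norm x)\<^sup>2)" and M_eq: "M = (\<integral>x. p x * (norm x)\<^sup>2 \<partial>lborel)"
    using moment unfolding p_def M_def by simp_all
  have log_ratio_measurable: "(\<lambda>x. ln (p x / std_gauss_density x)) \<in> borel_measurable lborel"
    unfolding p_def std_gauss_density_def by measurable
  obtain A where "\<And>x. \<bar>ln (p x / std_gauss_density x)\<bar> \<le> A + (L + 1) * (norm x)\<^sup>2"
    using log_ratio_std_gauss_abs_le unfolding p_def by blast
  then have KL_int: "integrable lborel (\<lambda>x. p x * ln (p x / std_gauss_density x))"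
    using integrable_mult_quadratic_bound[OF p_int p_moment log_ratio_measurable p_nonneg] by blast
  have "\<And>x. ln (p x / std_gauss_density x) \<le> L * DIM('a) + 1 / 2 * (norm x)\<^sup>2"
    using log_ratio_std_gauss_le unfolding p_def by simp
  then have "KL_dens p std_gauss_density \<le> L * DIM('a) * 1 + 1 / 2 * M"
    using integral_mult_le_quadratic_bound[OF KL_int p_int p_moment p_nonneg]
    unfolding KL_dens_def p_total M_eq by blast
  moreover have "M \<ge> 0"
    unfolding M_eq using p_nonneg by simp
  ultimately show ?thesis using KL_int by simp
qed

end
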